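(* Let $n$ be a positive integer (large enough that the partitions below are partitions of $n$). Then: (1) $\langle\psi_{(n)},s_{(1^n)}\rangle=\langle\psi_{(n-2,2)},s_{(1^n)}\rangle$ equals the number of self-conjugate partitions of $n$; (2) $\langle\psi_{(n-1,1)},s_{(1^n)}\rangle=\langle\psi_{(n)},s_{(1^n)}\rangle+(-1)^n$; (3) $\langle\psi_{(n-2,1^2)},s_{(1^n)}\rangle=\langle\psi_{(n)},s_{(1^n)}\rangle-(-1)^n$; (4) $\langle\psi_{(n-3,3)},s_{(1^n)}\rangle=\langle\psi_{(n)},s_{(1^n)}\rangle$; (5) $\langle\psi_{(2^k,1^{n-2k})},s_{(1^n)}\rangle=(-1)^k+\langle\psi_{(2^{k-1},1^{n-2k+2})},s_{(1^n)}\rangle$ for $1\le k\le\lfloor n/2\rfloor$; (6) $\langle\psi_{(3,1^{n-3})},s_{(1^n)}\rangle=1+\langle\psi_{(2^k,1^{n-2k})},s_{(1^n)}\rangle$ where $k=\lfloor n/2\rfloor$.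
   Context: $p_\lambda=\prod_ip_{\lambda_i}$ denotes power sums. Reverse lexicographic order on partitions of $n$: for distinct $\lambda,\mu\vdash n$, $\lambda>\mu$ iff $\lambda_j>\mu_j$ at the first index $j$ where they differ; $(1^n)$ is the minimum and $(n)$ the maximum. For $\mu\vdash n$, $\psi_\mu=\sum_{\lambda\vdash n,\ (1^n)\le\lambda\le\mu}p_\lambda$. $\langle\cdot,\cdot\rangle$ is the Hall inner product, for which the Schur functions form an orthonormal basis. *)

theory Defs
  imports Complex_Main
begin

definition is_partition :: "nat list \<Rightarrow> bool" where
  "is_partition lam \<longleftrightarrow> sorted_wrt (\<ge>) lam \<and> (\<forall>x\<in>set lam. 0 < x)"

definition partitions :: "nat \<Rightarrow> nat list set" where
  "partitions n = {lam. is_partition lam \<and> sum_list lam = n}"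

definition part :: "nat list \<Rightarrow> nat \<Rightarrow> nat" where
  "part lam j = (if j < length lam then lam ! j else 0)"

definition revlex_less :: "nat list \<Rightarrow> nat list \<Rightarrow> bool" where
  "revlex_less lam mu \<longleftrightarrow>
     (\<exists>j. (\<forall>i<j. part lam i = part mu i) \<and> part lam j < part mu j)"

definition revlex_le :: "nat list \<Rightarrow> nat list \<Rightarrow> bool" where
  "revlex_le lam mu \<longleftrightarrow> lam = mu \<or> revlex_less lam mu"

definition conj_part :: "nat list \<Rightarrow> nat list" where
  "conj_part lam = map (\<lambda>i. length (filter (\<lambda>x. i < x) lam)) [0..<foldr max lam 0]"

text \<open>The power sums p_lam (lam ranging over partitions) form a basis of the
  ring of symmetric functions over Q; a symmetric function is represented by
  its (finitely supported) coefficient function in this basis.\<close>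
type_synonym symfun = "nat list \<Rightarrow> rat"

definition p :: "nat list \<Rightarrow> symfun" where
  "p lam = (\<lambda>nu. if nu = lam then 1 else 0)"

definition zee :: "nat list \<Rightarrow> rat" where
  "zee lam = (\<Prod>i\<in>set lam. of_nat (i ^ count_list lam i * fact (count_list lam i)))"

text \<open>Hall inner product: <p_lam, p_mu> = z_lam delta_{lam mu}
  (extended bilinearly; f is assumed finitely supported).\<close>
definition hall :: "symfun \<Rightarrow> symfun \<Rightarrow> rat" where
  "hall f g = (\<Sum>lam\<in>{lam. is_partition lam \<and> f lam \<noteq> 0}. zee lam * f lam * g lam)"

text \<open>Elementary symmetric function e_n = s_(1^n), in the power-sum basis:
  e_n = sum over lam |- n of eps_lam z_lam^-1 p_lam, eps_lam = (-1)^(n - l(lam))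
  (Macdonald, I.(2.14')).\<close>
definition schur_col :: "nat \<Rightarrow> symfun" where
  "schur_col n = (\<lambda>nu. \<Sum>lam\<in>partitions n.
      ((-1) ^ (n - length lam) / zee lam) * p lam nu)"

definition psi :: "nat list \<Rightarrow> symfun" where
  "psi mu = (\<lambda>nu. \<Sum>lam\<in>{lam\<in>partitions (sum_list mu). revlex_le lam mu}. p lam nu)"

end

theory Submission
  imports Defs "HOL-Computational_Algebra.Formal_Power_Series"
begin

text \<open>
  Since \<open>\<langle>p\<^sub>\<lambda>, s\<^bsub>(1\<^sup>n)\<^esub>\<rangle> = \<epsilon>\<^sub>\<lambda>\<close>, the pairing
  \<open>\<langle>\<psi>\<^sub>\<mu>, s\<^bsub>(1\<^sup>n)\<^esub>\<rangle>\<close> is the signed count of the partitions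
  \<open>\<lambda> \<le> \<mu>\<close>. Splitting off the first part, for \<open>\<mu> = (a, \<mu>')\<close> this is the
  signed count \<open>S(n, a - 1)\<close> of the partitions of \<open>n\<close> with all parts
  \<open>< a\<close>, plus \<open>(-1)\<^bsup>a-1\<^esup>\<close> times the pairing for \<open>\<mu>'\<close>; and
  \<open>S(n, N) = S(n, N - 1) + (-1)\<^bsup>N-1\<^esup> S(n - N, N)\<close>. These two recursions
  settle (2)--(6) by computations with very small partitions.

  For (1), the recursion gives \<open>\<Sum>\<^sub>n S(n, N) q\<^sup>n = \<Prod>\<^sub>k\<^sub>\<le>\<^sub>N 1/(1 - (-1)\<^bsup>k-1\<^esup> q\<^sup>k)\<close>.
  Grouping the factors of \<open>\<Prod>\<^sub>k (1 + (-1)\<^bsup>k-1\<^esup> q\<^sup>k)\<close> in pairs turns it into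
  \<open>\<Prod>\<^sub>k (1 + q\<^bsup>2k-1\<^esup>)(1 - q\<^bsup>2k\<^esup>)\<close>, so the generating function of
  \<open>S(n, n)\<close> is \<open>\<Prod>\<^sub>k (1 + q\<^bsup>2k-1\<^esup>)\<close>. The same product counts
  self-conjugate partitions: removing the outer hook of a self-conjugate partition with
  largest part \<open>K + 1\<close> leaves a self-conjugate partition of \<open>n - (2K + 1)\<close> with
  largest part at most \<open>K\<close>. The products are truncated to finitely many factors, which
  leaves the coefficients of \<open>q\<^sup>n\<close> for small \<open>n\<close> unchanged.
\<close>

lemma is_partition_Nil [simp]: "is_partition []"
  by (simp add: is_partition_def)

lemma is_partition_Cons [simp]:
  "is_partition (a # l) \<longleftrightarrow> 0 < a \<and> (\<forall>x\<in>set l. x \<le> a) \<and> is_partition l"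
  by (auto simp: is_partition_def)

lemma part_Nil [simp]: "part [] i = 0"
  by (simp add: Defs.part_def)

lemma part_Cons_0 [simp]: "part (a # l) 0 = a"
  by (simp add: Defs.part_def)

lemma part_Cons_Suc [simp]: "part (a # l) (Suc i) = part l i"
  by (simp add: Defs.part_def)

lemma part_eq_nth: "i < length l \<Longrightarrow> part l i = l ! i"
  by (simp add: Defs.part_def)

lemma map_part_upt_length: "map (part l) [0..<length l] = l"
  by (rule nth_equalityI) (simp_all add: part_eq_nth)

lemma list_eq_if_part_eq: "length l = length m \<Longrightarrow> part l = part m \<Longrightarrow> l = m"
  by (metis map_part_upt_length)

lemma part_pos_iff: "is_partition l \<Longrightarrow> 0 < part l i \<longleftrightarrow> i < length l"
  by (auto simp: Defs.part_def is_partition_def)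

lemma part_antimono: "is_partition l \<Longrightarrow> i \<le> j \<Longrightarrow> part l j \<le> part l i"
proof (induction l arbitrary: i j)
  case (Cons a l)
  have "part l j' \<le> a" for j'
    using Cons.IH[of 0 j'] Cons.prems(1) by (cases l) auto
  with Cons show ?case
    by (cases i; cases j) auto
qed simp

lemma mem_le_part_0: "is_partition l \<Longrightarrow> x \<in> set l \<Longrightarrow> x \<le> part l 0"
  by (cases l) auto

lemma sum_list_eq_sum_part: "length l \<le> K \<Longrightarrow> sum_list l = (\<Sum>i<K. part l i)"
proof (induction l arbitrary: K)
  case (Cons a l)
  then obtain K' where "K = Suc K'" by (cases K) auto
  with Cons show ?case
    unfolding \<open>K = Suc K'\<close> sum.lessThan_Suc_shift by simp
qed simp

lemma length_le_sum_list: "is_partition l \<Longrightarrow> length l \<le> sum_list l"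
  by (induction l) auto

lemma Cons_in_partitions [simp]:
  "a # l \<in> partitions n \<longleftrightarrow> 0 < a \<and> a \<le> n \<and> (\<forall>x\<in>set l. x \<le> a) \<and> l \<in> partitions (n - a)"
  by (auto simp: partitions_def)

lemma Nil_in_partitions [simp]: "[] \<in> partitions n \<longleftrightarrow> n = 0"
  by (auto simp: partitions_def)

lemma partitions_0: "partitions 0 = {[]}"
proof -
  have "l \<in> partitions 0 \<Longrightarrow> l = []" for l
    by (cases l) auto
  then show ?thesis by auto
qed

lemma finite_partitions: "finite (partitions n)"
proof -
  have "partitions n \<subseteq> {l. set l \<subseteq> {..n} \<and> length l \<le> n}"
    by (auto simp: partitions_def length_le_sum_list member_le_sum_list)
  then show ?thesis
    using finite_lists_length_le[of "{..n}" n] finite_subset by blast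
qed

section \<open>The pairing with \<open>s\<^bsub>(1\<^sup>n)\<^esub>\<close>\<close>

text \<open>The sign \<open>\<epsilon>\<^sub>\<lambda> = (-1)\<^bsup>|\<lambda>| - l(\<lambda>)\<^esup>\<close>, written as a product over
  the parts so that it is multiplicative under \<open>Cons\<close>.\<close>

definition eps :: "nat list \<Rightarrow> rat" where
  "eps l = (\<Prod>x\<leftarrow>l. (-1) ^ (x - 1))"

lemma eps_Nil [simp]: "eps [] = 1"
  by (simp add: eps_def)

lemma eps_Cons [simp]: "eps (a # l) = (-1) ^ (a - 1) * eps l"
  by (simp add: eps_def)

lemma eps_eq_power: "is_partition l \<Longrightarrow> eps l = (-1) ^ (sum_list l - length l)"
proof (induction l)
  case (Cons a l)
  then have l: "is_partition l" and "0 < a"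
    by auto
  then have "sum_list (a # l) - length (a # l) = (a - 1) + (sum_list l - length l)"
    using length_le_sum_list[of l] by simp
  with Cons.IH[OF l] show ?case
    by (simp only: eps_Cons power_add)
qed simp

definition revlex_downset :: "nat list \<Rightarrow> nat list set" where
  "revlex_downset mu = {lam\<in>partitions (sum_list mu). revlex_le lam mu}"

definition psi_e :: "nat list \<Rightarrow> rat" where
  "psi_e mu = (\<Sum>lam\<in>revlex_downset mu. eps lam)"

lemma finite_revlex_downset [simp]: "finite (revlex_downset mu)"
  using finite_partitions by (simp add: revlex_downset_def)

lemma psi_apply: "psi mu nu = (if nu \<in> revlex_downset mu then 1 else 0)"
  unfolding psi_def p_def revlex_downset_def
  by (simp add: finite_partitions eq_commute[of nu])

lemma schur_col_apply:
  "schur_col n nu = (if nu \<in> partitions n then (-1) ^ (n - length nu) / zee nu else 0)"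
  unfolding schur_col_def p_def
  by (simp add: finite_partitions eq_commute[of nu] if_distrib[of "\<lambda>x. _ * x"] cong: if_cong)

lemma zee_nonzero: "is_partition l \<Longrightarrow> zee l \<noteq> 0"
  by (auto simp: zee_def is_partition_def)

lemma hall_psi_schur_col:
  assumes "sum_list mu = n"
  shows "hall (psi mu) (schur_col n) = psi_e mu"
proof -
  have "{lam. is_partition lam \<and> psi mu lam \<noteq> 0} = revlex_downset mu"
    by (auto simp: psi_apply revlex_downset_def partitions_def)
  then show ?thesis
    unfolding hall_def psi_e_def
    by (intro sum.cong)
      (auto simp: psi_apply schur_col_apply assms revlex_downset_def partitions_def
        zee_nonzero eps_eq_power)
qed

section \<open>Signed counts of partitions with bounded parts\<close>

definition bounded_partitions :: "nat \<Rightarrow> nat \<Rightarrow> nat list set" where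
  "bounded_partitions n N = {lam\<in>partitions n. \<forall>x\<in>set lam. x \<le> N}"

definition signed_count :: "nat \<Rightarrow> nat \<Rightarrow> rat" where
  "signed_count n N = (\<Sum>lam\<in>bounded_partitions n N. eps lam)"

lemma finite_bounded_partitions [simp]: "finite (bounded_partitions n N)"
  using finite_partitions by (simp add: bounded_partitions_def)

lemma bounded_partitions_eq_partitions: "n \<le> N \<Longrightarrow> bounded_partitions n N = partitions n"
  by (auto simp: bounded_partitions_def partitions_def dest: member_le_sum_list)

lemma bounded_partitions_bound_0: "bounded_partitions n 0 = (if n = 0 then {[]} else {})"
proof -
  have "lam \<in> bounded_partitions n 0 \<longleftrightarrow> lam = [] \<and> n = 0" for lam
    by (cases lam) (auto simp: bounded_partitions_def)
  then show ?thesis by auto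
qed

lemma bounded_partitions_Suc:
  assumes "Suc N \<le> n"
  shows "bounded_partitions n (Suc N)
    = bounded_partitions n N \<union> Cons (Suc N) ` bounded_partitions (n - Suc N) (Suc N)"
proof (intro set_eqI iffI)
  fix lam assume lam: "lam \<in> bounded_partitions n (Suc N)"
  show "lam \<in> bounded_partitions n N \<union> Cons (Suc N) ` bounded_partitions (n - Suc N) (Suc N)"
  proof (cases lam)
    case (Cons b r)
    show ?thesis
    proof (cases "b \<le> N")
      case True
      with lam Cons show ?thesis
        by (auto simp: bounded_partitions_def)
    next
      case False
      with lam Cons have b: "b = Suc N"
        by (auto simp: bounded_partitions_def)
      with lam Cons have "r \<in> bounded_partitions (n - Suc N) (Suc N)"
        by (auto simp: bounded_partitions_def)
      with Cons b show ?thesis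
        by blast
    qed
  qed (use lam in \<open>simp add: bounded_partitions_def\<close>)
qed (use assms in \<open>auto simp: bounded_partitions_def\<close>)

lemma signed_count_Suc:
  assumes "Suc N \<le> n"
  shows "signed_count n (Suc N) = signed_count n N + (-1) ^ N * signed_count (n - Suc N) (Suc N)"
proof -
  have "bounded_partitions n N \<inter> Cons (Suc N) ` bounded_partitions (n - Suc N) (Suc N) = {}"
    by (auto simp: bounded_partitions_def)
  then show ?thesis
    unfolding signed_count_def bounded_partitions_Suc[OF assms]
    by (simp add: sum.union_disjoint sum.reindex sum_distrib_left)
qed

lemma signed_count_stable: "n \<le> N \<Longrightarrow> n \<le> N' \<Longrightarrow> signed_count n N = signed_count n N'"
  by (simp add: signed_count_def bounded_partitions_eq_partitions)

lemma signed_count_bound_0: "signed_count n 0 = (if n = 0 then 1 else 0)"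
  by (simp add: signed_count_def bounded_partitions_bound_0)

lemma signed_count_size_0: "signed_count 0 N = 1"
  using signed_count_stable[of 0 N 0] by (simp add: signed_count_bound_0)

lemma signed_count_bound_1: "signed_count n 1 = 1"
proof (induction n)
  case (Suc n)
  then show ?case
    using signed_count_Suc[of 0 "Suc n"] by (simp add: signed_count_bound_0)
qed (simp add: signed_count_size_0)

lemma signed_count_bound_2: "signed_count n 2 = (if even (n div 2) then 1 else 0)"
proof (induction n rule: less_induct)
  case (less n)
  show ?case
  proof (cases "2 \<le> n")
    case True
    then have "signed_count n 2 = 1 - signed_count (n - 2) 2"
      using signed_count_Suc[of 1 n] signed_count_bound_1[of n] unfolding Suc_1 by simp
    moreover have "(n - 2) div 2 = n div 2 - 1" and "0 < n div 2"
      using True by auto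
    ultimately show ?thesis
      using less[of "n - 2"] True by auto
  next
    case False
    then have "signed_count n 2 = signed_count n n"
      by (intro signed_count_stable) auto
    moreover have "n = 0 \<or> n = 1"
      using False by auto
    ultimately show ?thesis
      using signed_count_bound_1[of 1, unfolded One_nat_def] by (auto simp: signed_count_size_0)
  qed
qed

lemma revlex_less_Cons:
  "revlex_less (a # l) (b # m) \<longleftrightarrow> a < b \<or> (a = b \<and> revlex_less l m)"
proof
  assume "revlex_less (a # l) (b # m)"
  then obtain j where eq: "\<forall>i<j. part (a # l) i = part (b # m) i"
    and less: "part (a # l) j < part (b # m) j"
    unfolding revlex_less_def by blast
  show "a < b \<or> (a = b \<and> revlex_less l m)"
  proof (cases j)
    case (Suc j')
    with eq have "a = b" and "\<forall>i<j'. part l i = part m i"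
      by (auto dest: spec[of _ 0] spec[of _ "Suc i" for i])
    with less Suc show ?thesis
      unfolding revlex_less_def by auto
  qed (use less in simp)
next
  assume "a < b \<or> (a = b \<and> revlex_less l m)"
  then show "revlex_less (a # l) (b # m)"
  proof
    assume "a < b"
    then show ?thesis
      unfolding revlex_less_def by (intro exI[of _ 0]) simp
  next
    assume "a = b \<and> revlex_less l m"
    then obtain j where "a = b" "\<forall>i<j. part l i = part m i" "part l j < part m j"
      unfolding revlex_less_def by blast
    then show ?thesis
      unfolding revlex_less_def by (intro exI[of _ "Suc j"]) (auto simp: less_Suc_eq_0_disj)
  qed
qed

lemma revlex_le_Cons:
  "revlex_le (a # l) (b # m) \<longleftrightarrow> a < b \<or> (a = b \<and> revlex_le l m)"
  unfolding revlex_le_def revlex_less_Cons by auto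

lemma revlex_less_if_part_0_less: "part l 0 < part m 0 \<Longrightarrow> revlex_less l m"
  unfolding revlex_less_def by (intro exI[of _ 0]) simp

lemma revlex_le_part_0: "revlex_le l m \<Longrightarrow> part l 0 \<le> part m 0"
  unfolding revlex_le_def revlex_less_def
  by (metis bot_nat_0.not_eq_extremum order.order_iff_strict)

lemma part_0_le_if_bounded: "\<forall>x\<in>set l. x \<le> a \<Longrightarrow> part l 0 \<le> a"
  by (cases l) auto

lemma revlex_downset_Nil: "revlex_downset [] = {[]}"
  by (auto simp: revlex_downset_def partitions_0 revlex_le_def)

lemma revlex_downset_Cons:
  assumes "0 < a" and bounded: "\<forall>x\<in>set m. x \<le> a"
  shows "revlex_downset (a # m)
    = bounded_partitions (a + sum_list m) (a - 1) \<union> Cons a ` revlex_downset m"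
proof (intro set_eqI iffI)
  fix lam assume lam: "lam \<in> revlex_downset (a # m)"
  then obtain b r where "lam = b # r"
    using assms by (cases lam) (auto simp: revlex_downset_def)
  with lam show "lam \<in> bounded_partitions (a + sum_list m) (a - 1) \<union> Cons a ` revlex_downset m"
    by (auto simp: revlex_downset_def bounded_partitions_def revlex_le_Cons)
next
  fix lam assume "lam \<in> bounded_partitions (a + sum_list m) (a - 1) \<union> Cons a ` revlex_downset m"
  then show "lam \<in> revlex_downset (a # m)"
  proof
    assume lam: "lam \<in> bounded_partitions (a + sum_list m) (a - 1)"
    then have "part lam 0 < part (a # m) 0"
      using \<open>0 < a\<close> part_0_le_if_bounded[of lam "a - 1"] by (auto simp: bounded_partitions_def)
    with lam show ?thesis
      by (auto simp: revlex_downset_def bounded_partitions_def revlex_le_def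
          revlex_less_if_part_0_less)
  next
    assume "lam \<in> Cons a ` revlex_downset m"
    then obtain r where lam: "lam = a # r" and r: "r \<in> partitions (sum_list m)" "revlex_le r m"
      by (auto simp: revlex_downset_def)
    have "x \<le> a" if "x \<in> set r" for x
      using mem_le_part_0[of r x] r revlex_le_part_0[OF r(2)] part_0_le_if_bounded[OF bounded] that
      by (auto simp: partitions_def)
    with lam r \<open>0 < a\<close> show ?thesis
      by (simp add: revlex_downset_def revlex_le_Cons)
  qed
qed

lemma psi_e_Nil: "psi_e [] = 1"
  by (simp add: psi_e_def revlex_downset_Nil)

lemma psi_e_Cons:
  assumes "0 < a" "\<forall>x\<in>set m. x \<le> a"
  shows "psi_e (a # m) = signed_count (a + sum_list m) (a - 1) + (-1) ^ (a - 1) * psi_e m"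
proof -
  have "bounded_partitions (a + sum_list m) (a - 1) \<inter> Cons a ` revlex_downset m = {}"
    using \<open>0 < a\<close> by (auto simp: bounded_partitions_def)
  then show ?thesis
    unfolding psi_e_def signed_count_def revlex_downset_Cons[OF assms]
    by (simp add: sum.union_disjoint sum.reindex sum_distrib_left)
qed

lemma psi_e_single: "0 < n \<Longrightarrow> psi_e [n] = signed_count n n"
  using psi_e_Cons[of n "[]"] signed_count_Suc[of "n - 1" n]
  by (simp add: psi_e_Nil signed_count_size_0)

lemma psi_e_pair:
  assumes "0 < b" "b \<le> a"
  shows "psi_e [a, b] = signed_count (a + b) a"
proof -
  have "psi_e [a, b] = signed_count (a + b) (a - 1) + (-1) ^ (a - 1) * signed_count b b"
    using assms psi_e_Cons[of a "[b]"] by (simp add: psi_e_single)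
  also have "signed_count b b = signed_count b a"
    using assms by (intro signed_count_stable) auto
  also have "signed_count (a + b) (a - 1) + (-1) ^ (a - 1) * \<dots> = signed_count (a + b) a"
    using assms signed_count_Suc[of "a - 1" "a + b"] by simp
  finally show ?thesis .
qed

lemma psi_e_replicate_1: "psi_e (replicate m 1) = 1"
proof (induction m)
  case (Suc m)
  then show ?case
    using psi_e_Cons[of 1 "replicate m 1"] by (simp add: signed_count_bound_0)
qed (simp add: psi_e_Nil)

lemma psi_e_two_column: "psi_e (replicate k 2 @ replicate j 1) = (if even k then 1 else 0)"
proof (induction k)
  case (Suc k)
  let ?m = "replicate k 2 @ replicate j 1"
  have "psi_e (2 # ?m) = signed_count (2 + sum_list ?m) 1 - psi_e ?m"
    using psi_e_Cons[of 2 ?m] by (simp add: set_replicate_conv_if)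
  \<comment> \<open>the simplifier normalises \<open>replicate j 1\<close> to \<open>replicate j (Suc 0)\<close>\<close>
  with Suc.IH show ?case
    using signed_count_bound_1[unfolded One_nat_def] by simp
qed (simp add: psi_e_replicate_1[unfolded One_nat_def])

section \<open>Self-conjugate partitions\<close>

text \<open>A function \<open>f\<close> is read as the row lengths of a Young diagram, whose cells are
  the pairs \<open>(i, j)\<close> with \<open>j < f i\<close>; symmetry of the diagram is self-conjugacy.\<close>

definition diagram_symmetric :: "(nat \<Rightarrow> nat) \<Rightarrow> bool" where
  "diagram_symmetric f \<longleftrightarrow> (\<forall>i j. j < f i \<longleftrightarrow> i < f j)"

lemma diagram_symmetric_pos_iff: "diagram_symmetric f \<Longrightarrow> 0 < f i \<longleftrightarrow> i < f 0"
  by (simp add: diagram_symmetric_def)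

lemma diagram_symmetric_antimono:
  assumes "diagram_symmetric f"
  shows "antimono f"
proof (rule antimonoI)
  fix x y :: nat assume "x \<le> y"
  have "j < f x" if "j < f y" for j
    using assms that \<open>x \<le> y\<close> by (metis diagram_symmetric_def le_less_trans)
  then show "f y \<le> f x"
    using not_le by blast
qed

lemma length_filter_less_iff:
  "is_partition l \<Longrightarrow> j < length (filter (\<lambda>x. i < x) l) \<longleftrightarrow> i < part l j"
proof (induction l arbitrary: j)
  case (Cons a l)
  show ?case
  proof (cases "i < a")
    case True
    with Cons show ?thesis
      by (cases j) auto
  next
    case False
    with Cons.prems have "filter (\<lambda>x. i < x) l = []" and "part (a # l) j \<le> a"
      using mem_le_part_0 part_antimono[of "a # l" 0 j] by (auto simp: filter_empty_conv)
    with False show ?thesis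
      by simp
  qed
qed simp

lemma foldr_max_eq_part_0: "is_partition l \<Longrightarrow> foldr max l 0 = part l 0"
proof (induction l)
  case (Cons a l)
  then have "part l 0 \<le> a"
    by (cases l) auto
  with Cons show ?case
    by (simp add: max_def)
qed simp

lemma less_part_conj_part_iff:
  assumes "is_partition l"
  shows "j < part (conj_part l) i \<longleftrightarrow> i < part l j"
proof (cases "i < part l 0")
  case True
  with assms have "part (conj_part l) i = length (filter (\<lambda>x. i < x) l)"
    by (simp add: conj_part_def Defs.part_def foldr_max_eq_part_0)
  with assms show ?thesis
    by (simp add: length_filter_less_iff)
next
  case False
  with assms show ?thesis
    using part_antimono[of l 0 j] by (simp add: conj_part_def Defs.part_def foldr_max_eq_part_0)
qed

lemma nat_eq_if_same_less: "(\<And>j::nat. j < a \<longleftrightarrow> j < b) \<Longrightarrow> a = b"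
  by (meson less_irrefl linorder_neqE_nat)

lemma length_eq_part_0_if_symmetric:
  "is_partition l \<Longrightarrow> diagram_symmetric (part l) \<Longrightarrow> length l = part l 0"
  by (intro nat_eq_if_same_less) (metis part_pos_iff diagram_symmetric_pos_iff)

lemma conj_part_eq_self_iff:
  assumes "is_partition l"
  shows "conj_part l = l \<longleftrightarrow> diagram_symmetric (part l)"
proof
  assume "conj_part l = l"
  then show "diagram_symmetric (part l)"
    using less_part_conj_part_iff[OF assms] by (metis diagram_symmetric_def)
next
  assume sym: "diagram_symmetric (part l)"
  have "part (conj_part l) i = part l i" for i
    using less_part_conj_part_iff[OF assms] sym
    by (intro nat_eq_if_same_less) (simp add: diagram_symmetric_def)
  then have "part (conj_part l) = part l"
    by blast
  moreover have "length (conj_part l) = length l"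
    using assms sym by (simp add: conj_part_def foldr_max_eq_part_0 length_eq_part_0_if_symmetric)
  ultimately show "conj_part l = l"
    by (intro list_eq_if_part_eq)
qed

text \<open>Summing over \<open>i < K\<close> counts all cells, since a symmetric diagram with
  \<open>f 0 \<le> K\<close> has at most \<open>K\<close> nonempty rows.\<close>

definition self_conjugate_diagrams :: "nat \<Rightarrow> nat \<Rightarrow> (nat \<Rightarrow> nat) set" where
  "self_conjugate_diagrams n K = {f. diagram_symmetric f \<and> f 0 \<le> K \<and> (\<Sum>i<K. f i) = n}"

lemma diagram_vanishes_beyond:
  "diagram_symmetric f \<Longrightarrow> f 0 \<le> K \<Longrightarrow> K \<le> i \<Longrightarrow> f i = 0"
  using diagram_symmetric_pos_iff[of f i] by linarith

lemma partition_of_symmetric_diagram: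
  assumes sym: "diagram_symmetric f"
  shows "is_partition (map f [0..<f 0])" "part (map f [0..<f 0]) = f"
proof -
  show "is_partition (map f [0..<f 0])"
    using diagram_symmetric_antimono[OF sym] diagram_symmetric_pos_iff[OF sym]
    by (auto simp: is_partition_def sorted_wrt_iff_nth_less antimonoD)
  show "part (map f [0..<f 0]) = f"
    using diagram_vanishes_beyond[OF sym] by (auto simp: Defs.part_def not_less)
qed

lemma card_self_conjugate_partitions:
  "card {lam\<in>partitions n. conj_part lam = lam} = card (self_conjugate_diagrams n n)"
proof (rule bij_betw_same_card, rule bij_betw_byWitness[where f' = "\<lambda>f. map f [0..<f 0]"])
  show "\<forall>lam\<in>{lam\<in>partitions n. conj_part lam = lam}. map (part lam) [0..<part lam 0] = lam"
  proof clarify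
    fix lam assume "lam \<in> partitions n" "conj_part lam = lam"
    then have "part lam 0 = length lam"
      by (simp add: partitions_def conj_part_eq_self_iff length_eq_part_0_if_symmetric)
    then show "map (part lam) [0..<part lam 0] = lam"
      by (simp add: map_part_upt_length)
  qed
  show "\<forall>f\<in>self_conjugate_diagrams n n. part (map f [0..<f 0]) = f"
    by (simp add: self_conjugate_diagrams_def partition_of_symmetric_diagram)
  show "part ` {lam\<in>partitions n. conj_part lam = lam} \<subseteq> self_conjugate_diagrams n n"
  proof clarify
    fix lam assume "lam \<in> partitions n" "conj_part lam = lam"
    then show "part lam \<in> self_conjugate_diagrams n n"
      using sum_list_eq_sum_part[of lam n] length_le_sum_list[of lam]
        member_le_sum_list[of "part lam 0" lam]
      by (auto simp: self_conjugate_diagrams_def partitions_def conj_part_eq_self_iff Defs.part_def)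
  qed
  show "(\<lambda>f. map f [0..<f 0]) ` self_conjugate_diagrams n n
    \<subseteq> {lam\<in>partitions n. conj_part lam = lam}"
  proof clarify
    fix f assume "f \<in> self_conjugate_diagrams n n"
    then have sym: "diagram_symmetric f" and "f 0 \<le> n" and "(\<Sum>i<n. f i) = n"
      by (auto simp: self_conjugate_diagrams_def)
    then show "map f [0..<f 0] \<in> partitions n \<and> conj_part (map f [0..<f 0]) = map f [0..<f 0]"
      using partition_of_symmetric_diagram[OF sym] sum_list_eq_sum_part[of "map f [0..<f 0]" n]
      by (simp add: partitions_def conj_part_eq_self_iff)
  qed
qed

text \<open>The outer hook is the first row together with the first column; for
  \<open>f 0 = K + 1\<close> it has \<open>2K + 1\<close> cells.\<close>

definition add_hook :: "nat \<Rightarrow> (nat \<Rightarrow> nat) \<Rightarrow> nat \<Rightarrow> nat" where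
  "add_hook K g = case_nat (Suc K) (\<lambda>i. if i < K then Suc (g i) else 0)"

definition remove_hook :: "(nat \<Rightarrow> nat) \<Rightarrow> nat \<Rightarrow> nat" where
  "remove_hook f = (\<lambda>i. f (Suc i) - 1)"

lemma diagram_symmetric_remove_hook:
  "diagram_symmetric f \<Longrightarrow> diagram_symmetric (remove_hook f)"
  unfolding diagram_symmetric_def remove_hook_def
  by (metis Suc_less_eq less_diff_conv Suc_eq_plus1)

lemma diagram_symmetric_add_hook:
  assumes sym: "diagram_symmetric g" and "g 0 \<le> K"
  shows "diagram_symmetric (add_hook K g)"
proof -
  have "i < g j \<Longrightarrow> i < K" for i j
    using antimonoD[OF diagram_symmetric_antimono[OF sym], of 0 j] \<open>g 0 \<le> K\<close> by simp
  then show ?thesis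
    using sym unfolding diagram_symmetric_def add_hook_def
    by (auto split: nat.split)
qed

lemma sum_remove_hook:
  assumes sym: "diagram_symmetric f" and "f 0 = Suc K"
  shows "(\<Sum>i<Suc K. f i) = 2 * K + 1 + (\<Sum>i<K. remove_hook f i)"
proof -
  have "f (Suc i) = Suc (remove_hook f i)" if "i < K" for i
    using diagram_symmetric_pos_iff[OF sym, of "Suc i"] that \<open>f 0 = Suc K\<close>
    by (simp add: remove_hook_def)
  then have "(\<Sum>i<K. f (Suc i)) = K + (\<Sum>i<K. remove_hook f i)"
    by (simp add: sum_Suc)
  then show ?thesis
    unfolding sum.lessThan_Suc_shift using \<open>f 0 = Suc K\<close> by simp
qed

lemma finite_self_conjugate_diagrams: "finite (self_conjugate_diagrams n K)"
proof (rule finite_subset)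
  show "self_conjugate_diagrams n K
    \<subseteq> {f. \<forall>x. (x \<in> {..<K} \<longrightarrow> f x \<in> {..K}) \<and> (x \<notin> {..<K} \<longrightarrow> f x = 0)}"
  proof clarify
    fix f x assume "f \<in> self_conjugate_diagrams n K"
    then have sym: "diagram_symmetric f" and "f 0 \<le> K"
      by (auto simp: self_conjugate_diagrams_def)
    then have "f x \<le> K"
      using antimonoD[OF diagram_symmetric_antimono[OF sym], of 0 x] by simp
    with sym \<open>f 0 \<le> K\<close> show "(x \<in> {..<K} \<longrightarrow> f x \<in> {..K}) \<and> (x \<notin> {..<K} \<longrightarrow> f x = 0)"
      using diagram_vanishes_beyond[of f K x] by simp
  qed
qed (intro finite_set_of_finite_funs; simp)

lemma self_conjugate_diagrams_bound_0:
  "self_conjugate_diagrams n 0 = (if n = 0 then {\<lambda>_. 0} else {})"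
  using diagram_vanishes_beyond[of _ 0]
  by (auto simp: self_conjugate_diagrams_def diagram_symmetric_def)

lemma self_conjugate_diagrams_Suc_iff:
  "f \<in> self_conjugate_diagrams n (Suc K)
    \<longleftrightarrow> f \<in> self_conjugate_diagrams n K \<or> f \<in> self_conjugate_diagrams n (Suc K) \<and> f 0 = Suc K"
proof (cases "diagram_symmetric f \<and> f 0 \<le> K")
  case True
  then have "(\<Sum>i<Suc K. f i) = (\<Sum>i<K. f i)"
    using diagram_vanishes_beyond[of f K K] by simp
  with True show ?thesis
    by (auto simp: self_conjugate_diagrams_def)
qed (auto simp: self_conjugate_diagrams_def)

lemma add_hook_0 [simp]: "add_hook K g 0 = Suc K"
  by (simp add: add_hook_def)

lemma remove_hook_add_hook:
  "diagram_symmetric g \<Longrightarrow> g 0 \<le> K \<Longrightarrow> remove_hook (add_hook K g) = g"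
  using diagram_vanishes_beyond[of g K] by (auto simp: remove_hook_def add_hook_def not_less)

lemma add_hook_remove_hook:
  assumes sym: "diagram_symmetric f" and "f 0 = Suc K"
  shows "add_hook K (remove_hook f) = f"
proof
  fix i
  show "add_hook K (remove_hook f) i = f i"
  proof (cases i)
    case (Suc j)
    then show ?thesis
      using assms diagram_symmetric_pos_iff[OF sym, of i]
        diagram_vanishes_beyond[OF sym, of "Suc K" i]
      by (auto simp: add_hook_def remove_hook_def)
  qed (simp add: \<open>f 0 = Suc K\<close>)
qed

lemma add_hook_in_self_conjugate_diagrams:
  assumes "g \<in> self_conjugate_diagrams m K"
  shows "add_hook K g \<in> self_conjugate_diagrams (m + (2 * K + 1)) (Suc K)"
proof -
  have sym: "diagram_symmetric g" and "g 0 \<le> K" and "(\<Sum>i<K. g i) = m"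
    using assms by (auto simp: self_conjugate_diagrams_def)
  then have "diagram_symmetric (add_hook K g)"
    by (simp add: diagram_symmetric_add_hook)
  moreover from this have "(\<Sum>i<Suc K. add_hook K g i) = 2 * K + 1 + m"
    using sum_remove_hook[of "add_hook K g" K] remove_hook_add_hook[OF sym \<open>g 0 \<le> K\<close>]
      \<open>(\<Sum>i<K. g i) = m\<close> by simp
  ultimately show ?thesis
    by (simp add: self_conjugate_diagrams_def)
qed

lemma remove_hook_in_self_conjugate_diagrams:
  assumes "f \<in> self_conjugate_diagrams n (Suc K)" and "f 0 = Suc K"
  shows "remove_hook f \<in> self_conjugate_diagrams (n - (2 * K + 1)) K" and "2 * K + 1 \<le> n"
proof -
  have sym: "diagram_symmetric f" and sum: "(\<Sum>i<Suc K. f i) = n"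
    using assms by (auto simp: self_conjugate_diagrams_def)
  then show "2 * K + 1 \<le> n"
    using sum_remove_hook[OF sym \<open>f 0 = Suc K\<close>] by simp
  have "remove_hook f 0 \<le> K"
    using antimonoD[OF diagram_symmetric_antimono[OF sym], of 0 1] \<open>f 0 = Suc K\<close>
    by (simp add: remove_hook_def)
  with sym sum show "remove_hook f \<in> self_conjugate_diagrams (n - (2 * K + 1)) K"
    using sum_remove_hook[OF sym \<open>f 0 = Suc K\<close>]
    by (simp add: self_conjugate_diagrams_def diagram_symmetric_remove_hook)
qed

lemma card_self_conjugate_diagrams_Suc:
  "card (self_conjugate_diagrams n (Suc K))
    = card (self_conjugate_diagrams n K)
      + (if 2 * K + 1 \<le> n then card (self_conjugate_diagrams (n - (2 * K + 1)) K) else 0)"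
proof -
  let ?H = "{f\<in>self_conjugate_diagrams n (Suc K). f 0 = Suc K}"
  have "self_conjugate_diagrams n (Suc K) = self_conjugate_diagrams n K \<union> ?H"
    using self_conjugate_diagrams_Suc_iff by blast
  moreover have "self_conjugate_diagrams n K \<inter> ?H = {}"
    by (auto simp: self_conjugate_diagrams_def)
  ultimately have "card (self_conjugate_diagrams n (Suc K))
      = card (self_conjugate_diagrams n K) + card ?H"
    using finite_self_conjugate_diagrams by (metis (no_types, lifting) card_Un_disjoint finite_Un)
  also have "card ?H
      = (if 2 * K + 1 \<le> n then card (self_conjugate_diagrams (n - (2 * K + 1)) K) else 0)"
  proof (cases "2 * K + 1 \<le> n")
    case True
    have "bij_betw remove_hook ?H (self_conjugate_diagrams (n - (2 * K + 1)) K)"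
    proof (rule bij_betw_byWitness[where f' = "add_hook K"])
      show "\<forall>f\<in>?H. add_hook K (remove_hook f) = f"
        by (simp add: self_conjugate_diagrams_def add_hook_remove_hook)
      show "\<forall>g\<in>self_conjugate_diagrams (n - (2 * K + 1)) K. remove_hook (add_hook K g) = g"
        by (simp add: self_conjugate_diagrams_def remove_hook_add_hook)
      show "remove_hook ` ?H \<subseteq> self_conjugate_diagrams (n - (2 * K + 1)) K"
        using remove_hook_in_self_conjugate_diagrams(1) by blast
      show "add_hook K ` self_conjugate_diagrams (n - (2 * K + 1)) K \<subseteq> ?H"
        using add_hook_in_self_conjugate_diagrams[of _ "n - (2 * K + 1)" K] True by auto
    qed
    with True show ?thesis
      by (simp add: bij_betw_same_card)
  next
    case False
    then have "?H = {}"
      using remove_hook_in_self_conjugate_diagrams(2) by blast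
    with False show ?thesis
      by (metis card.empty)
  qed
  finally show ?thesis .
qed

section \<open>Generating functions\<close>

definition signed_count_fps :: "nat \<Rightarrow> rat fps" where
  "signed_count_fps N = Abs_fps (\<lambda>n. signed_count n N)"

definition self_conjugate_fps :: "nat \<Rightarrow> rat fps" where
  "self_conjugate_fps K = Abs_fps (\<lambda>n. of_nat (card (self_conjugate_diagrams n K)))"

lemma signed_count_fps_Suc:
  "signed_count_fps (Suc N) * (1 - fps_const ((-1) ^ N) * fps_X ^ Suc N) = signed_count_fps N"
proof (rule fps_ext)
  fix n
  have "signed_count n (Suc N)
      - (if Suc N \<le> n then (-1) ^ N * signed_count (n - Suc N) (Suc N) else 0) = signed_count n N"
    using signed_count_Suc[of N n] signed_count_stable[of n N "Suc N"] by auto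
  moreover have "signed_count_fps (Suc N) * (1 - fps_const ((-1) ^ N) * fps_X ^ Suc N)
      = signed_count_fps (Suc N)
        - fps_const ((-1) ^ N) * (signed_count_fps (Suc N) * fps_X ^ Suc N)"
    by (simp add: algebra_simps del: power_Suc)
  ultimately show "fps_nth (signed_count_fps (Suc N) * (1 - fps_const ((-1) ^ N) * fps_X ^ Suc N)) n
      = fps_nth (signed_count_fps N) n"
    by (simp add: signed_count_fps_def fps_X_power_mult_right_nth not_less split: if_splits
        del: power_Suc)
qed

lemma signed_count_fps_mult_prod:
  "signed_count_fps N * (\<Prod>k<N. 1 - fps_const ((-1) ^ k) * fps_X ^ Suc k) = 1"
proof (induction N)
  case 0
  show ?case
    by (simp add: signed_count_fps_def signed_count_bound_0 fps_ext)
next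
  case (Suc N)
  have "signed_count_fps (Suc N) * (\<Prod>k<Suc N. 1 - fps_const ((-1) ^ k) * fps_X ^ Suc k)
      = signed_count_fps (Suc N) * (1 - fps_const ((-1) ^ N) * fps_X ^ Suc N)
        * (\<Prod>k<N. 1 - fps_const ((-1) ^ k) * fps_X ^ Suc k)"
    by (simp only: prod.lessThan_Suc mult_ac)
  with Suc.IH show ?case
    by (simp only: signed_count_fps_Suc)
qed

lemma self_conjugate_fps_eq_prod: "self_conjugate_fps K = (\<Prod>k<K. 1 + fps_X ^ (2 * k + 1))"
proof (induction K)
  case 0
  show ?case
    by (simp add: self_conjugate_fps_def self_conjugate_diagrams_bound_0 fps_ext)
next
  case (Suc K)
  have "self_conjugate_fps (Suc K) = self_conjugate_fps K * (1 + fps_X ^ (2 * K + 1))"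
  proof (rule fps_ext)
    fix n
    have "fps_nth (self_conjugate_fps K * (1 + fps_X ^ (2 * K + 1))) n
        = fps_nth (self_conjugate_fps K) n + fps_nth (self_conjugate_fps K * fps_X ^ (2 * K + 1)) n"
      by (simp only: distrib_left mult_1_right fps_add_nth)
    then show "fps_nth (self_conjugate_fps (Suc K)) n
        = fps_nth (self_conjugate_fps K * (1 + fps_X ^ (2 * K + 1))) n"
      unfolding fps_X_power_mult_right_nth
      by (simp add: self_conjugate_fps_def card_self_conjugate_diagrams_Suc not_less)
  qed
  with Suc show ?case
    by simp
qed

lemma prod_alternating_signs_even:
  "(\<Prod>k<2 * M. 1 + fps_const ((-1) ^ k) * fps_X ^ Suc k)
    = (\<Prod>k<M. (1 + fps_X ^ (2 * k + 1)) * (1 - fps_X ^ (2 * k + 2)) :: 'a::comm_ring_1 fps)"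
proof (induction M)
  case (Suc M)
  have "2 * Suc M = Suc (Suc (2 * M))"
    by simp
  with Suc show ?case
    by (simp add: mult.assoc fps_const_neg[symmetric] del: fps_const_neg)
qed simp

lemma prod_opposite_signs:
  "(\<Prod>k<N. 1 - fps_const ((-1) ^ k) * fps_X ^ Suc k)
      * (\<Prod>k<N. 1 + fps_const ((-1) ^ k) * fps_X ^ Suc k)
    = (\<Prod>k<N. 1 - fps_X ^ (2 * k + 2) :: 'a::comm_ring_1 fps)"
proof -
  have "(1 - fps_const ((-1) ^ k) * fps_X ^ Suc k) * (1 + fps_const ((-1) ^ k) * fps_X ^ Suc k)
      = 1 - fps_const (((-1) ^ k) * ((-1) ^ k)) * (fps_X ^ Suc k * fps_X ^ Suc k :: 'a fps)" for k
    by (simp add: algebra_simps)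
  also have "\<dots> k = 1 - fps_X ^ (2 * k + 2)" for k
  proof -
    have "2 * k + 2 = Suc k + Suc k"
      by simp
    then show ?thesis
      by (simp only: power_add) simp
  qed
  finally show ?thesis
    by (simp add: prod.distrib[symmetric])
qed

lemma prod_one_minus_high_powers:
  fixes N :: nat
  assumes "\<forall>k<N. m \<le> d k"
  shows "\<exists>U. (\<Prod>k<N. 1 - fps_X ^ d k :: 'a::comm_ring_1 fps) = 1 + fps_X ^ m * U"
  using assms
proof (induction N)
  case 0
  show ?case
    by (auto intro: exI[of _ 0])
next
  case (Suc N)
  then obtain U where U: "(\<Prod>k<N. 1 - fps_X ^ d k :: 'a fps) = 1 + fps_X ^ m * U"
    by auto
  have "(1 :: 'a fps) - fps_X ^ d N = 1 + fps_X ^ m * (- (fps_X ^ (d N - m)))"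
    using Suc.prems by (simp add: power_add[symmetric])
  then have "(\<Prod>k<Suc N. 1 - fps_X ^ d k :: 'a fps)
      = 1 + fps_X ^ m * (U - fps_X ^ (d N - m) - fps_X ^ m * U * fps_X ^ (d N - m))"
    by (simp add: U algebra_simps)
  then show ?case
    by blast
qed

lemma prod_lessThan_add:
  fixes m n :: nat
  shows "(\<Prod>k<m + n. g k) = (\<Prod>k<m. g k) * (\<Prod>k<n. g (k + m))"
  using prod.atLeastLessThan_concat[of 0 m "m + n" g] prod.shift_bounds_nat_ivl[of g 0 m n]
  by (simp add: atLeast0LessThan add.commute)

lemma fps_nth_mult_one_plus_high:
  "n < m \<Longrightarrow> fps_nth (F * (1 + fps_X ^ m * U)) n = (fps_nth F n :: 'a::comm_ring_1)"
  by (simp add: distrib_left mult.left_commute[of F] fps_X_power_mult_nth)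

lemma signed_count_eq_card_diagrams:
  assumes "n < 2 * M + 2"
  shows "signed_count n (2 * M) = of_nat (card (self_conjugate_diagrams n M))"
proof -
  define E where "E = (\<Prod>k<M. 1 - fps_X ^ (2 * k + 2) :: rat fps)"
  define Q where "Q = (\<Prod>k<M. 1 - fps_X ^ (2 * (k + M) + 2) :: rat fps)"
  define P where "P = (\<Prod>k<2 * M. 1 - fps_const ((-1) ^ k) * fps_X ^ Suc k :: rat fps)"
  define P' where "P' = (\<Prod>k<2 * M. 1 + fps_const ((-1) ^ k) * fps_X ^ Suc k :: rat fps)"
  have "self_conjugate_fps M * E = P'"
    unfolding self_conjugate_fps_eq_prod E_def P'_def prod_alternating_signs_even prod.distrib ..
  also have "P' = signed_count_fps (2 * M) * (P * P')"
    using signed_count_fps_mult_prod[of "2 * M"] by (simp add: P_def mult.assoc[symmetric])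
  also have "P * P' = E * Q"
  proof -
    have "P * P' = (\<Prod>k<M + M. 1 - fps_X ^ (2 * k + 2))"
      unfolding P_def P'_def prod_opposite_signs by (simp add: mult_2)
    also have "\<dots> = E * Q"
      unfolding E_def Q_def by (rule prod_lessThan_add)
    finally show ?thesis .
  qed
  finally have "self_conjugate_fps M * E = signed_count_fps (2 * M) * Q * E"
    by (simp add: mult.assoc mult.commute)
  moreover have "E \<noteq> 0"
  proof -
    have "fps_nth E 0 = 1"
      unfolding E_def by (induction M) simp_all
    then show ?thesis
      by auto
  qed
  ultimately have "self_conjugate_fps M = signed_count_fps (2 * M) * Q"
    by simp
  moreover obtain U where "Q = 1 + fps_X ^ (2 * M + 2) * U"
    using prod_one_minus_high_powers[of M "2 * M + 2" "\<lambda>k. 2 * (k + M) + 2"] by (auto simp: Q_def)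
  ultimately have "fps_nth (self_conjugate_fps M) n = fps_nth (signed_count_fps (2 * M)) n"
    using fps_nth_mult_one_plus_high[OF assms] by (simp only:)
  then show ?thesis
    by (simp add: self_conjugate_fps_def signed_count_fps_def)
qed

lemma signed_count_eq_card_self_conjugate:
  "signed_count n n = of_nat (card {lam\<in>partitions n. conj_part lam = lam})"
  using signed_count_stable[of n n "2 * n"] signed_count_eq_card_diagrams[of n n]
  by (simp add: card_self_conjugate_partitions)

lemma psi_e_Cons_replicate_1:
  assumes "0 < a"
  shows "psi_e (a # replicate j 1) = signed_count (a + j) (a - 1) + (-1) ^ (a - 1)"
  using assms psi_e_Cons[of a "replicate j 1"] psi_e_replicate_1[of j, unfolded One_nat_def]
  by (simp add: sum_list_replicate)

lemma signed_count_top: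
  assumes "4 \<le> n"
  shows "signed_count n (n - 2) = signed_count n (n - 3)"
    and "signed_count n (n - 1) = signed_count n (n - 3) + (-1) ^ n"
    and "signed_count n n = signed_count n (n - 3)"
proof -
  obtain m where "n = 4 + m"
    using le_Suc_ex[OF assms] by blast
  then have n: "n = Suc (Suc (Suc (Suc m)))"
    by simp
  have "signed_count 2 (Suc (Suc m)) = signed_count 2 2"
    by (rule signed_count_stable) auto
  also have "\<dots> = 0"
    using signed_count_Suc[of 1 2, unfolded Suc_1] signed_count_bound_1[of 2]
    by (simp add: signed_count_size_0)
  finally show "signed_count n (n - 2) = signed_count n (n - 3)"
    using signed_count_Suc[of "Suc m" n] n by (simp add: numeral_2_eq_2)
  moreover have "signed_count 1 (Suc (Suc (Suc m))) = 1"
    using signed_count_stable[of 1 "Suc (Suc (Suc m))" 1] signed_count_bound_1[of 1] by simp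
  ultimately show "signed_count n (n - 1) = signed_count n (n - 3) + (-1) ^ n"
    using signed_count_Suc[of "Suc (Suc m)" n] n by simp
  then show "signed_count n n = signed_count n (n - 3)"
    using signed_count_Suc[of "Suc (Suc (Suc m))" n] n by (simp add: signed_count_size_0)
qed

lemma psi_e_near_top:
  assumes "6 \<le> n"
  shows "psi_e [n - 1, 1] = psi_e [n] + (-1) ^ n"
    and "psi_e [n - 2, 2] = psi_e [n]"
    and "psi_e [n - 2, 1, 1] = psi_e [n] - (-1) ^ n"
    and "psi_e [n - 3, 3] = psi_e [n]"
proof -
  have pair: "psi_e [n - k, k] = signed_count n (n - k)" if "0 < k" "2 * k \<le> n" for k
    using psi_e_pair[of k "n - k"] that by simp
  have "replicate 2 (1 :: nat) = [1, 1]" and "n - 2 + 2 = n"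
    using assms by (auto simp: numeral_2_eq_2)
  then have "psi_e [n - 2, 1, 1] = signed_count n (n - 3) + (-1) ^ (n - 3)"
    using psi_e_Cons_replicate_1[of "n - 2" 2] assms by simp
  moreover have "(-1 :: rat) ^ (n - 3) = - ((-1) ^ n)"
    using power_add[of "-1 :: rat" "n - 3" 3] assms by simp
  ultimately show "psi_e [n - 1, 1] = psi_e [n] + (-1) ^ n"
    and "psi_e [n - 2, 2] = psi_e [n]"
    and "psi_e [n - 2, 1, 1] = psi_e [n] - (-1) ^ n"
    and "psi_e [n - 3, 3] = psi_e [n]"
    using assms psi_e_single[of n] pair[of 1] pair[of 2] pair[of 3] signed_count_top[of n]
    by simp_all
qed

lemma psi_e_two_column_step:
  "1 \<le> k \<Longrightarrow>
    psi_e (replicate k 2 @ replicate i 1) = (-1) ^ k + psi_e (replicate (k - 1) 2 @ replicate j 1)"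
  by (simp only: psi_e_two_column) (cases "even k"; simp)

lemma psi_e_three_ones:
  assumes "3 \<le> n"
  shows "psi_e (3 # replicate (n - 3) 1) = 1 + psi_e (replicate (n div 2) 2 @ replicate j 1)"
  using assms psi_e_Cons_replicate_1[of 3 "n - 3"] psi_e_two_column[of "n div 2" j]
  by (simp add: signed_count_bound_2)

theorem corollary2p17:
  fixes n :: nat
  assumes "n \<ge> 6"
  shows
    "(hall (psi [n]) (schur_col n) = hall (psi [n-2, 2]) (schur_col n)
      \<and> hall (psi [n]) (schur_col n) = of_nat (card {lam\<in>partitions n. conj_part lam = lam}))
   \<and> hall (psi [n-1, 1]) (schur_col n) = hall (psi [n]) (schur_col n) + (-1) ^ n
   \<and> hall (psi [n-2, 1, 1]) (schur_col n) = hall (psi [n]) (schur_col n) - (-1) ^ n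
   \<and> hall (psi [n-3, 3]) (schur_col n) = hall (psi [n]) (schur_col n)
   \<and> (\<forall>k. 1 \<le> k \<and> k \<le> n div 2 \<longrightarrow>
        hall (psi (replicate k 2 @ replicate (n - 2*k) 1)) (schur_col n)
        = (-1) ^ k + hall (psi (replicate (k-1) 2 @ replicate (n - 2*k + 2) 1)) (schur_col n))
   \<and> hall (psi (3 # replicate (n-3) 1)) (schur_col n)
      = 1 + hall (psi (replicate (n div 2) 2 @ replicate (n - 2*(n div 2)) 1)) (schur_col n)"
proof -
  have hall: "hall (psi mu) (schur_col n) = psi_e mu" if "sum_list mu = n" for mu
    using that by (rule hall_psi_schur_col)
  have "hall (psi [n]) (schur_col n) = psi_e [n]"
    and "hall (psi [n - 1, 1]) (schur_col n) = psi_e [n - 1, 1]"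
    and "hall (psi [n - 2, 2]) (schur_col n) = psi_e [n - 2, 2]"
    and "hall (psi [n - 2, 1, 1]) (schur_col n) = psi_e [n - 2, 1, 1]"
    and "hall (psi [n - 3, 3]) (schur_col n) = psi_e [n - 3, 3]"
    and "hall (psi (3 # replicate (n - 3) 1)) (schur_col n) = psi_e (3 # replicate (n - 3) 1)"
    and "hall (psi (replicate (n div 2) 2 @ replicate (n - 2 * (n div 2)) 1)) (schur_col n)
      = psi_e (replicate (n div 2) 2 @ replicate (n - 2 * (n div 2)) 1)"
    using assms by (auto intro!: hall simp: sum_list_replicate)
  moreover have "hall (psi (replicate k 2 @ replicate (n - 2 * k) 1)) (schur_col n)
      = (-1) ^ k + hall (psi (replicate (k - 1) 2 @ replicate (n - 2 * k + 2) 1)) (schur_col n)"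
    if "1 \<le> k" "k \<le> n div 2" for k
  proof -
    have "sum_list (replicate k 2 @ replicate (n - 2 * k) 1) = n"
      and "sum_list (replicate (k - 1) 2 @ replicate (n - 2 * k + 2) 1) = n"
      using that by (auto simp: sum_list_replicate)
    with that show ?thesis
      by (simp only: hall psi_e_two_column_step)
  qed
  ultimately show ?thesis
    using assms psi_e_near_top[OF assms] psi_e_three_ones[of n]
      psi_e_single[of n] signed_count_eq_card_self_conjugate[of n]
    by simp
qed

end
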